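(* Let $m\ge 2$, $\eta\in(0,1/m]$, $k>0$, $b\ge 0$ and $\tau\in(0,1)$. For all $\pi,\pi'\in\Delta_{m,\eta}$ with $\|\pi-\pi'\|_2\le b$ and all $z\in\Delta_{m,\tau}$, $$\log p_{k\pi}(z)\ \le\ \log p_{k\pi'}(z)+\sqrt{m}\,b\,k\,|\log\tau|+(m-1)\log\Gamma(k\eta)+\log\Gamma\big(k(1-(m-1)\eta)\big)-m\log\Gamma(k/m),$$ where $p_{k\pi}(z)=\Gamma(k)\prod_{i=1}^m z_i^{k\pi_i-1}/\Gamma(k\pi_i)$ denotes the density of $\mathrm{Dir}_k(\pi)$ at $z$.
   Context: For $n\in\mathbb{N}$ and $\eta\ge 0$, the $\eta$-restricted simplex is $\Delta_{n,\eta}=\{x\in\mathbb{R}^n:\sum_{i=1}^n x_i=1,\ x_i\ge\eta\ \forall i\}$. $\Gamma$ denotes the gamma function. For $k>0$ and $\pi\in\Delta_{n,\eta}$ with $\eta>0$, the Dirichlet mechanism $\mathrm{Dir}_k(\pi)$ outputs a random point of the simplex distributed according to the Dirichlet distribution with parameter vector $k\pi$, with density $\Gamma(k)\prod_{i=1}^n x_i^{k\pi_i-1}/\Gamma(k\pi_i)$. *)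

theory Defs
  imports "HOL-Analysis.Analysis"
begin

text \<open>Points of R^m are represented as functions nat => real, indexed by {0..<m}.\<close>

definition restricted_simplex :: "nat \<Rightarrow> real \<Rightarrow> (nat \<Rightarrow> real) set" where
  "restricted_simplex n \<eta> = {x. (\<Sum>i<n. x i) = 1 \<and> (\<forall>i<n. x i \<ge> \<eta>)}"

definition dirichlet_density :: "nat \<Rightarrow> real \<Rightarrow> (nat \<Rightarrow> real) \<Rightarrow> (nat \<Rightarrow> real) \<Rightarrow> real" where
  "dirichlet_density n k \<pi> z =
     Gamma k * (\<Prod>i<n. z i powr (k * \<pi> i - 1) / Gamma (k * \<pi> i))"

definition l2_dist :: "nat \<Rightarrow> (nat \<Rightarrow> real) \<Rightarrow> (nat \<Rightarrow> real) \<Rightarrow> real" where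
  "l2_dist n x y = sqrt (\<Sum>i<n. (x i - y i)^2)"

end

theory Submission
  imports Defs
begin

text \<open>Write the log-density as
  \<open>ln \<Gamma>(k) + k \<Sum> \<pi>\<^sub>i ln z\<^sub>i - \<Sum> ln z\<^sub>i - \<Sum> ln \<Gamma>(k \<pi>\<^sub>i)\<close>.
  In the difference of two log-densities the \<open>\<pi>\<close>-dependent linear part is bounded by
  Cauchy-Schwarz, since \<open>|ln z\<^sub>i| \<le> |ln \<tau>|\<close>. The remaining Gamma terms are controlled by
  log-convexity of \<open>\<Gamma>\<close>: Jensen's inequality bounds \<open>\<Sum> ln \<Gamma>(k \<pi>\<^sub>i)\<close> below by its value
  at the barycentre \<open>\<pi>\<^sub>i = 1/m\<close>, and bounding a convex function by its chord shows that
  \<open>\<Sum> ln \<Gamma>(k \<pi>'\<^sub>i)\<close> is largest at a vertex of \<open>\<Delta>\<^sub>m\<^sub>,\<^sub>\<eta>\<close>.\<close>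

lemma restricted_simplex_le:
  assumes "x \<in> restricted_simplex n \<eta>" "i < n"
  shows "x i \<le> 1 - real (n - 1) * \<eta>"
proof -
  have "1 = x i + (\<Sum>j\<in>{..<n} - {i}. x j)"
    using assms by (simp add: restricted_simplex_def sum.remove[of "{..<n}" i])
  moreover have "(\<Sum>j\<in>{..<n} - {i}. x j) \<ge> (\<Sum>j\<in>{..<n} - {i}. \<eta>)"
    using assms by (intro sum_mono) (auto simp: restricted_simplex_def)
  moreover have "(\<Sum>j\<in>{..<n} - {i}. \<eta>) = real (n - 1) * \<eta>"
    using assms by simp
  ultimately show ?thesis by linarith
qed

lemma abs_ln_restricted_simplex_le:
  assumes "x \<in> restricted_simplex n \<tau>" "0 < \<tau>" "i < n"
  shows "\<bar>ln (x i)\<bar> \<le> \<bar>ln \<tau>\<bar>"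
proof -
  have "\<tau> \<le> x i" using assms by (simp add: restricted_simplex_def)
  moreover have "x i \<le> 1"
    using restricted_simplex_le[OF assms(1,3)] \<open>0 < \<tau>\<close> mult_nonneg_nonneg[of "real (n - 1)" \<tau>]
    by linarith
  ultimately show ?thesis using \<open>0 < \<tau>\<close> by simp
qed

lemma ln_dirichlet_density:
  assumes "k > 0" "\<And>i. i < n \<Longrightarrow> z i > 0" "\<And>i. i < n \<Longrightarrow> \<pi> i > 0"
  shows "ln (dirichlet_density n k \<pi> z) =
    ln (Gamma k) + (\<Sum>i<n. (k * \<pi> i - 1) * ln (z i) - ln (Gamma (k * \<pi> i)))"
proof -
  define q where "q i = z i powr (k * \<pi> i - 1) / Gamma (k * \<pi> i)" for i
  have q_pos: "q i > 0" if "i < n" for i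
    unfolding q_def using assms(1) assms(2,3)[OF that] by (intro divide_pos_pos Gamma_real_pos) auto
  have ln_q: "ln (q i) = (k * \<pi> i - 1) * ln (z i) - ln (Gamma (k * \<pi> i))" if "i < n" for i
    unfolding q_def using assms(2)[OF that] Gamma_real_pos[OF mult_pos_pos[OF assms(1) assms(3)[OF that]]]
    by (simp add: ln_div ln_powr)
  have "ln (dirichlet_density n k \<pi> z) = ln (Gamma k) + ln (\<Prod>i<n. q i)"
    unfolding dirichlet_density_def q_def[symmetric] using assms(1) q_pos
    by (intro ln_mult_pos prod_pos) auto
  also have "\<dots> = ln (Gamma k) + (\<Sum>i<n. ln (q i))"
    using q_pos by (subst ln_prod) (auto simp: less_imp_neq[symmetric])
  also have "\<dots> = ln (Gamma k) + (\<Sum>i<n. (k * \<pi> i - 1) * ln (z i) - ln (Gamma (k * \<pi> i)))"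
    by (intro arg_cong2[where f = "(+)"] sum.cong) (simp_all add: ln_q)
  finally show ?thesis .
qed

lemma ln_dirichlet_density_diff:
  assumes "k > 0" "\<And>i. i < n \<Longrightarrow> z i > 0"
    and "\<And>i. i < n \<Longrightarrow> \<pi> i > 0" "\<And>i. i < n \<Longrightarrow> \<pi>' i > 0"
  shows "ln (dirichlet_density n k \<pi> z) - ln (dirichlet_density n k \<pi>' z)
     = k * (\<Sum>i<n. (\<pi> i - \<pi>' i) * ln (z i))
       + (\<Sum>i<n. ln (Gamma (k * \<pi>' i))) - (\<Sum>i<n. ln (Gamma (k * \<pi> i)))"
  using assms
  by (simp add: ln_dirichlet_density sum_subtractf sum_distrib_left algebra_simps
        flip: sum.distrib)

lemma sum_diff_mult_le_l2_dist:
  assumes "\<And>i. i < n \<Longrightarrow> \<bar>a i\<bar> \<le> c"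
  shows "(\<Sum>i<n. (x i - y i) * a i) \<le> sqrt (real n) * l2_dist n x y * c"
proof (cases "n = 0")
  case False
  then have "c \<ge> 0" using assms[of 0] by simp
  have square_le: "(a i)\<^sup>2 \<le> c\<^sup>2" if "i < n" for i
    using assms[OF that] \<open>c \<ge> 0\<close> abs_le_square_iff[of "a i" c] by simp
  have "(\<Sum>i<n. (x i - y i) * a i)\<^sup>2 \<le> (\<Sum>i<n. (x i - y i)\<^sup>2) * (\<Sum>i<n. (a i)\<^sup>2)"
    by (rule Cauchy_Schwarz_ineq_sum)
  also have "\<dots> \<le> (\<Sum>i<n. (x i - y i)\<^sup>2) * (\<Sum>i<n. c\<^sup>2)"
    using square_le by (intro mult_left_mono sum_mono sum_nonneg) auto
  also have "\<dots> = (sqrt (real n) * l2_dist n x y * c)\<^sup>2"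
    by (simp add: l2_dist_def power_mult_distrib sum_nonneg)
  finally have "(\<Sum>i<n. (x i - y i) * a i)\<^sup>2 \<le> (sqrt (real n) * l2_dist n x y * c)\<^sup>2" .
  then show ?thesis
    by (rule power2_le_imp_le) (use \<open>c \<ge> 0\<close> in \<open>simp add: l2_dist_def sum_nonneg\<close>)
qed (simp add: l2_dist_def)

lemma convex_on_sum_le_chord:
  fixes f :: "real \<Rightarrow> real"
  assumes "convex_on {a..c} f" "n \<ge> 1"
    and "\<And>i. i < n \<Longrightarrow> x i \<in> {a..c}"
    and "(\<Sum>i<n. x i) = real (n - 1) * a + c"
  shows "(\<Sum>i<n. f (x i)) \<le> real (n - 1) * f a + f c"
proof -
  define s where "s = (f c - f a) / (c - a)"
  have "(\<Sum>i<n. f (x i)) \<le> (\<Sum>i<n. s * (x i - a) + f a)"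
    unfolding s_def using assms(3) by (intro sum_mono convex_onD_Icc'[OF assms(1)]) auto
  also have "\<dots> = s * (c - a) + real n * f a"
    using assms(2,4) by (simp add: sum.distrib sum_subtractf flip: sum_distrib_left)
      (simp add: of_nat_diff algebra_simps)
  also have "s * (c - a) = f c - f a"
    by (cases "c = a") (simp_all add: s_def)
  finally show ?thesis
    using assms(2) by (simp add: of_nat_diff algebra_simps)
qed

lemma convex_on_mean_le_sum:
  fixes f :: "real \<Rightarrow> real"
  assumes "convex_on C f" "n > 0" "\<And>i. i < n \<Longrightarrow> x i \<in> C"
  shows "real n * f ((\<Sum>i<n. x i) / real n) \<le> (\<Sum>i<n. f (x i))"
proof -
  have "f (\<Sum>i<n. (1 / real n) *\<^sub>R x i) \<le> (\<Sum>i<n. (1 / real n) * f (x i))"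
    using assms by (intro convex_on_sum) auto
  then show ?thesis
    using assms(2) by (simp add: sum_divide_distrib[symmetric] field_simps)
qed

lemma restricted_simplex_pos:
  assumes "x \<in> restricted_simplex n \<eta>" "0 < \<eta>" "i < n"
  shows "0 < x i"
  using assms by (auto simp: restricted_simplex_def intro: order_less_le_trans)

lemma convex_on_ln_Gamma: "convex_on {0<..} (\<lambda>x::real. ln (Gamma x))"
  using log_convex_Gamma_real by (simp add: o_def)

lemma sum_ln_Gamma_restricted_simplex_le:
  assumes "x \<in> restricted_simplex n \<eta>" "n \<ge> 1" "0 < \<eta>" "0 < k"
  shows "(\<Sum>i<n. ln (Gamma (k * x i)))
    \<le> real (n - 1) * ln (Gamma (k * \<eta>)) + ln (Gamma (k * (1 - real (n - 1) * \<eta>)))"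
proof (rule convex_on_sum_le_chord[where a = "k * \<eta>" and c = "k * (1 - real (n - 1) * \<eta>)"])
  show "convex_on {k * \<eta>..k * (1 - real (n - 1) * \<eta>)} (\<lambda>x. ln (Gamma x))"
    using assms(3,4) by (intro convex_on_subset[OF convex_on_ln_Gamma])
      (auto intro: less_le_trans[OF mult_pos_pos])
  show "k * x i \<in> {k * \<eta>..k * (1 - real (n - 1) * \<eta>)}" if "i < n" for i
    using assms(1,4) restricted_simplex_le[OF assms(1) that] that
    by (auto simp: restricted_simplex_def)
  show "(\<Sum>i<n. k * x i) = real (n - 1) * (k * \<eta>) + k * (1 - real (n - 1) * \<eta>)"
    using assms(1) by (simp add: restricted_simplex_def algebra_simps flip: sum_distrib_left)
qed (fact assms(2))

lemma sum_ln_Gamma_restricted_simplex_ge: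
  assumes "x \<in> restricted_simplex n \<eta>" "n > 0" "0 < \<eta>" "0 < k"
  shows "real n * ln (Gamma (k / real n)) \<le> (\<Sum>i<n. ln (Gamma (k * x i)))"
  using convex_on_mean_le_sum[OF convex_on_ln_Gamma, of n "\<lambda>i. k * x i"]
    restricted_simplex_pos[OF assms(1,3)] assms
  by (simp add: restricted_simplex_def flip: sum_distrib_left)

theorem mainTheorem3:
  fixes m :: nat and \<eta> k b \<tau> :: real and \<pi> \<pi>' z :: "nat \<Rightarrow> real"
  assumes "m \<ge> 2"
    and "0 < \<eta>" and "\<eta> \<le> 1 / real m"
    and "k > 0" and "b \<ge> 0"
    and "0 < \<tau>" and "\<tau> < 1"
    and "\<pi> \<in> restricted_simplex m \<eta>" and "\<pi>' \<in> restricted_simplex m \<eta>"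
    and "l2_dist m \<pi> \<pi>' \<le> b"
    and "z \<in> restricted_simplex m \<tau>"
  shows "ln (dirichlet_density m k \<pi> z)
     \<le> ln (dirichlet_density m k \<pi>' z) + sqrt (real m) * b * k * \<bar>ln \<tau>\<bar>
        + real (m - 1) * ln (Gamma (k * \<eta>))
        + ln (Gamma (k * (1 - real (m - 1) * \<eta>)))
        - real m * ln (Gamma (k / real m))"
proof -
  have "0 < m" "1 \<le> m" using assms(1) by simp_all
  have "k * (\<Sum>i<m. (\<pi> i - \<pi>' i) * ln (z i)) \<le> k * (sqrt (real m) * l2_dist m \<pi> \<pi>' * \<bar>ln \<tau>\<bar>)"
    using assms(4,6,11) abs_ln_restricted_simplex_le
    by (intro mult_left_mono sum_diff_mult_le_l2_dist) auto
  also have "\<dots> \<le> sqrt (real m) * b * k * \<bar>ln \<tau>\<bar>"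
    using assms(4) mult_right_mono[OF assms(10), of "k * sqrt (real m) * \<bar>ln \<tau>\<bar>"]
    by (simp add: ac_simps)
  finally have "k * (\<Sum>i<m. (\<pi> i - \<pi>' i) * ln (z i)) \<le> sqrt (real m) * b * k * \<bar>ln \<tau>\<bar>" .
  moreover have "ln (dirichlet_density m k \<pi> z) - ln (dirichlet_density m k \<pi>' z)
     = k * (\<Sum>i<m. (\<pi> i - \<pi>' i) * ln (z i))
       + (\<Sum>i<m. ln (Gamma (k * \<pi>' i))) - (\<Sum>i<m. ln (Gamma (k * \<pi> i)))"
    using assms(2,6,8,9,11) by (intro ln_dirichlet_density_diff restricted_simplex_pos assms(4))
  moreover note sum_ln_Gamma_restricted_simplex_le[OF assms(9) \<open>1 \<le> m\<close> assms(2,4)]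
    and sum_ln_Gamma_restricted_simplex_ge[OF assms(8) \<open>0 < m\<close> assms(2,4)]
  ultimately show ?thesis
    by linarith
qed

end
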